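(* Let $(X,d^\star)$ be a totally bounded $\star$-metric space. Then for every subset $M\subseteq X$, the $\star$-metric space $(M,d^\star|_{M\times M})$ is totally bounded.
   Context: A $t$-definer is a function $\star:[0,\infty)\times[0,\infty)\to[0,\infty)$ such that for all $a,b,c\ge 0$: $a\star b=b\star a$; $a\star(b\star c)=(a\star b)\star c$; if $a\le b$ then $a\star c\le b\star c$; $a\star 0=a$; and $\star$ is continuous in its first variable with respect to the Euclidean topology. Given a nonempty set $X$ and a $t$-definer $\star$, a $\star$-metric on $X$ is a function $d^\star:X\times X\to[0,\infty)$ such that for all $x,y,z\in X$: $d^\star(x,y)=0$ iff $x=y$; $d^\star(x,y)=d^\star(y,x)$; and $d^\star(x,y)\le d^\star(x,z)\star d^\star(z,y)$; $(X,d^\star)$ is a $\star$-metric space. Put $B_{d^\star}(a,r)=\{x\in X: d^\star(a,x)<r\}$. $(X,d^\star)$ is totally bounded if for every $\epsilon>0$ there is a finite set $F\subseteq X$ with $X=\bigcup_{x\in F}B_{d^\star}(x,\epsilon)$. For a subset $M$, the restriction of $d^\star$ to $M\times M$ is a $\star$-metric on $M$, and total boundedness of $(M,d^\star|_{M\times M})$ uses balls and finite sets within $M$. *)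

theory Defs
  imports Complex_Main
begin

text \<open>A t-definer: a binary operation on [0,\<infinity>), represented as a function
  on real numbers whose behaviour is only constrained on nonnegative arguments.\<close>
definition t_definer :: "(real \<Rightarrow> real \<Rightarrow> real) \<Rightarrow> bool" where
  "t_definer star \<longleftrightarrow>
     (\<forall>a\<ge>0. \<forall>b\<ge>0. star a b \<ge> 0) \<and>
     (\<forall>a\<ge>0. \<forall>b\<ge>0. star a b = star b a) \<and>
     (\<forall>a\<ge>0. \<forall>b\<ge>0. \<forall>c\<ge>0. star a (star b c) = star (star a b) c) \<and>
     (\<forall>a\<ge>0. \<forall>b\<ge>0. \<forall>c\<ge>0. a \<le> b \<longrightarrow> star a c \<le> star b c) \<and>
     (\<forall>a\<ge>0. star a 0 = a) \<and>
     (\<forall>b\<ge>0. continuous_on {0..} (\<lambda>a. star a b))"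

definition star_metric :: "(real \<Rightarrow> real \<Rightarrow> real) \<Rightarrow> 'a set \<Rightarrow> ('a \<Rightarrow> 'a \<Rightarrow> real) \<Rightarrow> bool" where
  "star_metric star X d \<longleftrightarrow>
     X \<noteq> {} \<and>
     (\<forall>x\<in>X. \<forall>y\<in>X. d x y \<ge> 0) \<and>
     (\<forall>x\<in>X. \<forall>y\<in>X. d x y = 0 \<longleftrightarrow> x = y) \<and>
     (\<forall>x\<in>X. \<forall>y\<in>X. d x y = d y x) \<and>
     (\<forall>x\<in>X. \<forall>y\<in>X. \<forall>z\<in>X. d x y \<le> star (d x z) (d z y))"

definition star_ball :: "'a set \<Rightarrow> ('a \<Rightarrow> 'a \<Rightarrow> real) \<Rightarrow> 'a \<Rightarrow> real \<Rightarrow> 'a set" where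
  "star_ball X d a r = {x\<in>X. d a x < r}"

definition star_totally_bounded :: "'a set \<Rightarrow> ('a \<Rightarrow> 'a \<Rightarrow> real) \<Rightarrow> bool" where
  "star_totally_bounded X d \<longleftrightarrow>
     (\<forall>\<epsilon>>0. \<exists>F. finite F \<and> F \<subseteq> X \<and> X = (\<Union>x\<in>F. star_ball X d x \<epsilon>))"

end

theory Submission
  imports Defs
begin

text \<open>Cover \<open>X\<close> by finitely many \<open>\<delta>\<close>-balls, where \<open>\<delta> \<star> \<delta> < \<epsilon>\<close>; such a \<open>\<delta>\<close> exists
  because \<open>a \<star> (\<epsilon>/2)\<close> tends to \<open>\<epsilon>/2\<close> as \<open>a \<rightarrow> 0\<close>. Every centre whose ball meets \<open>M\<close> is
  replaced by a point of \<open>M\<close> inside its ball; by the \<open>\<star>\<close>-triangle inequality the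
  \<open>\<epsilon>\<close>-balls around these new centres cover \<open>M\<close>.\<close>

lemma t_definer_mono:
  assumes "t_definer star" "0 \<le> a" "a \<le> a'" "0 \<le> b" "b \<le> b'"
  shows "star a b \<le> star a' b'"
proof -
  have comm: "\<And>a b. a \<ge> 0 \<Longrightarrow> b \<ge> 0 \<Longrightarrow> star a b = star b a"
    and mono: "\<And>a b c. a \<ge> 0 \<Longrightarrow> b \<ge> 0 \<Longrightarrow> c \<ge> 0 \<Longrightarrow> a \<le> b \<Longrightarrow> star a c \<le> star b c"
    using assms(1) unfolding t_definer_def by blast+
  have "star a b \<le> star a' b" using mono assms by simp
  also have "\<dots> = star b a'" using comm assms by simp
  also have "\<dots> \<le> star b' a'" using mono assms by simp
  also have "\<dots> = star a' b'" using comm assms by simp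
  finally show ?thesis .
qed

lemma t_definer_exists_small_square:
  assumes t: "t_definer star" and e: "0 < e"
  shows "\<exists>\<delta>>0. star \<delta> \<delta> < e"
proof -
  define b where "b = e / 2"
  have b: "0 < b" using e by (simp add: b_def)
  have "star 0 b = b"
    using t b unfolding t_definer_def by (metis order.refl order_less_imp_le)
  moreover have "continuous (at 0 within {0..}) (\<lambda>a. star a b)"
    using t b unfolding t_definer_def by (simp add: continuous_on_eq_continuous_within)
  ultimately have "\<forall>\<^sub>F a in at 0 within {0..}. dist (star a b) b < b"
    using b unfolding continuous_within tendsto_iff by metis
  then obtain r where r: "0 < r"
    and near: "\<And>a. 0 < a \<Longrightarrow> a < r \<Longrightarrow> \<bar>star a b - b\<bar> < b"
    unfolding eventually_at by (auto simp: dist_real_def)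
  define \<delta> where "\<delta> = min (r / 2) b"
  have \<delta>: "0 < \<delta>" using r b by (simp add: \<delta>_def)
  have "star \<delta> \<delta> \<le> star (r / 2) b"
    using t_definer_mono[OF t] \<delta> by (simp add: \<delta>_def)
  also have "\<dots> < e"
    using near[of "r / 2"] r unfolding b_def by arith
  finally show ?thesis using \<delta> by blast
qed

lemma star_metric_dist_le_star:
  assumes t: "t_definer star" and d: "star_metric star X d"
    and X: "x \<in> X" "y \<in> X" "z \<in> X"
    and zx: "d z x \<le> \<delta>" and zy: "d z y \<le> \<delta>"
  shows "d x y \<le> star \<delta> \<delta>"
proof -
  have nonneg: "\<And>x y. x \<in> X \<Longrightarrow> y \<in> X \<Longrightarrow> 0 \<le> d x y"
    and comm: "\<And>x y. x \<in> X \<Longrightarrow> y \<in> X \<Longrightarrow> d x y = d y x"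
    and tri: "\<And>x y z. x \<in> X \<Longrightarrow> y \<in> X \<Longrightarrow> z \<in> X \<Longrightarrow> d x y \<le> star (d x z) (d z y)"
    using d unfolding star_metric_def by blast+
  have "d x y \<le> star (d x z) (d z y)" using tri X by simp
  also have "\<dots> \<le> star \<delta> \<delta>"
    using t_definer_mono[OF t] nonneg comm X zx zy by simp
  finally show ?thesis .
qed

lemma star_totally_bounded_subset:
  assumes t: "t_definer star" and d: "star_metric star X d"
    and X: "star_totally_bounded X d" and M: "M \<subseteq> X"
  shows "star_totally_bounded M d"
  unfolding star_totally_bounded_def
proof (intro allI impI)
  fix e :: real assume "0 < e"
  then obtain \<delta> where \<delta>: "0 < \<delta>" "star \<delta> \<delta> < e"
    using t_definer_exists_small_square[OF t] by blast
  obtain F where F: "finite F" "F \<subseteq> X" "X = (\<Union>x\<in>F. star_ball X d x \<delta>)"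
    using X \<delta>(1) unfolding star_totally_bounded_def by meson
  define G where "G = {x\<in>F. \<exists>m\<in>M. d x m < \<delta>}"
  have "\<forall>x\<in>G. \<exists>m. m \<in> M \<and> d x m < \<delta>"
    by (auto simp: G_def)
  then obtain c where c: "\<And>x. x \<in> G \<Longrightarrow> c x \<in> M \<and> d x (c x) < \<delta>"
    by (metis bchoice)
  have "M \<subseteq> (\<Union>x\<in>c ` G. star_ball M d x e)"
  proof
    fix y assume y: "y \<in> M"
    then obtain x where x: "x \<in> F" "d x y < \<delta>"
      using F(3) M unfolding star_ball_def by blast
    then have "x \<in> G" using y by (auto simp: G_def)
    then have "d (c x) y \<le> star \<delta> \<delta>"
      using star_metric_dist_le_star[OF t d] c x F(2) M y by (meson less_imp_le subsetD)
    then show "y \<in> (\<Union>x\<in>c ` G. star_ball M d x e)"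
      using \<open>x \<in> G\<close> y \<delta>(2) unfolding star_ball_def by force
  qed
  then have "M = (\<Union>x\<in>c ` G. star_ball M d x e)"
    by (auto simp: star_ball_def)
  moreover have "finite (c ` G)" using F(1) by (simp add: G_def)
  moreover have "c ` G \<subseteq> M" using c by blast
  ultimately show "\<exists>F. finite F \<and> F \<subseteq> M \<and> M = (\<Union>x\<in>F. star_ball M d x e)"
    by blast
qed

theorem theorem3p4:
  fixes star :: "real \<Rightarrow> real \<Rightarrow> real"
    and X :: "'a set" and d :: "'a \<Rightarrow> 'a \<Rightarrow> real"
  assumes "t_definer star"
    and "star_metric star X d"
    and "star_totally_bounded X d"
  shows "\<forall>M. M \<subseteq> X \<longrightarrow> star_totally_bounded M d"
  using star_totally_bounded_subset[OF assms] by blast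

end
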